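(* For every $a^*>0$ and every $\beta>0$, $\kappa_1(4\pi,\beta)<\beta$.
   Context: $\mathcal F_{4\pi}$ is the set of $f\in L^2(]0,a^*[)$ whose distributional derivative satisfies $\int_0^{a^*}a|f'(a)|^2da<\infty$, and $\kappa_1(4\pi,\beta):=\inf_{f\in\mathcal F_{4\pi}\setminus\{0\}}\frac{\int_0^{a^*}\left(4\pi a|f'|^2+\frac{\beta^2a}{4\pi}|f|^2\right)da}{\int_0^{a^*}|f|^2da}$. *)

theory Defs
  imports "HOL-Analysis.Analysis"
begin

definition test_fun :: "real \<Rightarrow> (real \<Rightarrow> real) \<Rightarrow> bool" where
  "test_fun A \<phi> \<longleftrightarrow>
     (\<forall>n x. ((deriv ^^ n) \<phi>) differentiable (at x)) \<and>
     (\<exists>K. compact K \<and> K \<subseteq> {0<..<A} \<and> (\<forall>x. x \<notin> K \<longrightarrow> \<phi> x = 0))"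

definition weak_deriv_on :: "real \<Rightarrow> (real \<Rightarrow> complex) \<Rightarrow> (real \<Rightarrow> complex) \<Rightarrow> bool" where
  "weak_deriv_on A f g \<longleftrightarrow>
     g \<in> borel_measurable lborel \<and>
     (\<forall>K. compact K \<and> K \<subseteq> {0<..<A} \<longrightarrow> set_integrable lborel K g) \<and>
     (\<forall>\<phi>. test_fun A \<phi> \<longrightarrow>
        (\<integral>x\<in>{0<..<A}. f x * of_real (deriv \<phi> x) \<partial>lborel)
          = - (\<integral>x\<in>{0<..<A}. g x * of_real (\<phi> x) \<partial>lborel))"

definition in_F :: "real \<Rightarrow> (real \<Rightarrow> complex) \<Rightarrow> (real \<Rightarrow> complex) \<Rightarrow> bool" where
  "in_F A f g \<longleftrightarrow>
     f \<in> borel_measurable lborel \<and>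
     set_integrable lborel {0<..<A} (\<lambda>x. (cmod (f x))\<^sup>2) \<and>
     weak_deriv_on A f g \<and>
     set_integrable lborel {0<..<A} (\<lambda>x. x * (cmod (g x))\<^sup>2)"

text \<open>kappa_1(4 pi, beta) for the interval ]0,A[ (A = a*). Nonzero f means nonzero in L^2.\<close>
definition kappa1 :: "real \<Rightarrow> real \<Rightarrow> real" where
  "kappa1 A \<beta> = Inf {(\<integral>x\<in>{0<..<A}. (4 * pi * x * (cmod (g x))\<^sup>2
                         + \<beta>\<^sup>2 * x / (4 * pi) * (cmod (f x))\<^sup>2) \<partial>lborel)
                     / (\<integral>x\<in>{0<..<A}. (cmod (f x))\<^sup>2 \<partial>lborel)
                   | f g. in_F A f g \<and> (\<integral>x\<in>{0<..<A}. (cmod (f x))\<^sup>2 \<partial>lborel) \<noteq> 0}"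

end

theory Submission
  imports Defs
begin

text \<open>The trial function \<open>f a = exp (-c a)\<close> with \<open>c = \<beta> / (4\<pi>)\<close> balances the two terms of the
  energy: with \<open>k = 2c\<close> the numerator of the Rayleigh quotient is \<open>k \<beta> \<integral>\<^sub>0\<^sup>A a e\<^sup>-\<^sup>k\<^sup>a da\<close>, which
  by an integration by parts equals \<open>\<beta> (\<integral>\<^sub>0\<^sup>A e\<^sup>-\<^sup>k\<^sup>a da - A e\<^sup>-\<^sup>k\<^sup>A)\<close>. The boundary term makes the
  quotient strictly smaller than \<open>\<beta>\<close>, and \<open>\<kappa>\<^sub>1\<close> is at most this quotient.\<close>

lemma set_integral_Ioo_FTC:
  fixes f F :: "real \<Rightarrow> real"
  assumes "0 \<le> A" "continuous_on {0..A} f"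
    and "\<And>x. 0 \<le> x \<Longrightarrow> x \<le> A \<Longrightarrow> (F has_real_derivative f x) (at x)"
  shows "(LINT x:{0<..<A}|lborel. f x) = F A - F 0"
proof -
  have "(LBINT x=ereal 0..ereal A. f x) = F A - F 0"
    using assms by (intro interval_integral_FTC_finite)
      (auto simp: has_real_derivative_iff_has_vector_derivative[symmetric]
        intro: has_field_derivative_at_within)
  then show ?thesis using assms(1) by (simp add: interval_integral_Ioo)
qed

lemma set_integrable_Ioo_continuous:
  fixes f :: "real \<Rightarrow> 'a::{banach, second_countable_topology}"
  assumes "continuous_on UNIV f"
  shows "set_integrable lborel {0<..<A} f"
proof -
  have "set_integrable lborel {0..A} f"
    unfolding set_integrable_def
    by (rule borel_integrable_compact) (auto intro: continuous_on_subset[OF assms])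
  then show ?thesis by (rule set_integrable_subset) auto
qed

lemma test_fun_C1:
  assumes "test_fun A \<phi>"
  shows "\<And>x. (\<phi> has_real_derivative deriv \<phi> x) (at x)"
    and "continuous_on UNIV (deriv \<phi>)"
    and "\<phi> 0 = 0" "\<phi> A = 0"
proof -
  have "\<phi> differentiable (at x)" "deriv \<phi> differentiable (at x)" for x
    using assms unfolding test_fun_def by (metis funpow_0, metis funpow_0 funpow_Suc_right o_apply)
  then show "(\<phi> has_real_derivative deriv \<phi> x) (at x)" for x
    by (simp add: DERIV_deriv_iff_real_differentiable)
  show "continuous_on UNIV (deriv \<phi>)"
    using \<open>\<And>x. deriv \<phi> differentiable (at x)\<close>
    by (simp add: differentiable_imp_continuous_on differentiable_on_def differentiable_at_withinI)
  obtain K where "K \<subseteq> {0<..<A}" "\<And>x. x \<notin> K \<Longrightarrow> \<phi> x = 0"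
    using assms unfolding test_fun_def by blast
  then have "0 \<notin> K" "A \<notin> K" by auto
  then show "\<phi> 0 = 0" "\<phi> A = 0" using \<open>\<And>x. x \<notin> K \<Longrightarrow> \<phi> x = 0\<close> by auto
qed

lemma weak_deriv_on_of_real:
  fixes F F' :: "real \<Rightarrow> real"
  assumes A: "0 \<le> A"
    and F: "\<And>x. (F has_real_derivative F' x) (at x)" and F': "continuous_on UNIV F'"
  shows "weak_deriv_on A (\<lambda>x. of_real (F x)) (\<lambda>x. of_real (F' x))"
  unfolding weak_deriv_on_def
proof (intro conjI allI impI)
  have "continuous_on UNIV (\<lambda>x. complex_of_real (F' x))"
    using F' by (intro continuous_intros)
  then show "(\<lambda>x. complex_of_real (F' x)) \<in> borel_measurable lborel"
    by (simp add: borel_measurable_continuous_onI)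
  fix K :: "real set" assume "compact K \<and> K \<subseteq> {0<..<A}"
  then show "set_integrable lborel K (\<lambda>x. complex_of_real (F' x))"
    unfolding set_integrable_def
    by (intro borel_integrable_compact) (auto intro!: continuous_intros continuous_on_subset[OF F'])
next
  fix \<phi> assume "test_fun A \<phi>"
  note \<phi> = test_fun_C1[OF this]
  have cF: "continuous_on UNIV F"
    using F by (meson DERIV_isCont continuous_at_imp_continuous_on)
  have c\<phi>: "continuous_on UNIV \<phi>"
    using \<phi>(1) by (meson DERIV_isCont continuous_at_imp_continuous_on)
  have c1: "continuous_on UNIV (\<lambda>x. F x * deriv \<phi> x)"
    by (intro continuous_intros cF \<phi>(2))
  have c2: "continuous_on UNIV (\<lambda>x. F' x * \<phi> x)"
    by (intro continuous_intros F' c\<phi>)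
  have "(LINT x:{0<..<A}|lborel. F x * deriv \<phi> x + F' x * \<phi> x) = F A * \<phi> A - F 0 * \<phi> 0"
    using A continuous_on_subset[OF continuous_on_add[OF c1 c2]]
    by (intro set_integral_Ioo_FTC) (auto intro!: derivative_eq_intros F \<phi>(1))
  also have "\<dots> = 0" using \<phi>(3,4) by simp
  finally have "(LINT x:{0<..<A}|lborel. F x * deriv \<phi> x) = - (LINT x:{0<..<A}|lborel. F' x * \<phi> x)"
    using set_integral_add(2)[OF set_integrable_Ioo_continuous[OF c1] set_integrable_Ioo_continuous[OF c2]]
    by simp
  then show "(LINT x:{0<..<A}|lborel. complex_of_real (F x) * complex_of_real (deriv \<phi> x)) =
        - (LINT x:{0<..<A}|lborel. complex_of_real (F' x) * complex_of_real (\<phi> x))"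
    by (simp flip: of_real_mult add: set_integral_complex_of_real)
qed

lemma in_F_exp:
  fixes A c :: real
  assumes "0 \<le> A"
  shows "in_F A (\<lambda>x. of_real (exp (-c*x))) (\<lambda>x. of_real (-c * exp (-c*x)))"
  unfolding in_F_def
proof (intro conjI)
  show "weak_deriv_on A (\<lambda>x. of_real (exp (-c*x))) (\<lambda>x. of_real (-c * exp (-c*x)))"
    using assms
    by (intro weak_deriv_on_of_real) (auto intro!: derivative_eq_intros continuous_intros)
qed (auto intro!: continuous_intros set_integrable_Ioo_continuous)

lemma kappa1_le_Rayleigh_quotient:
  assumes "in_F A f g" and "(\<integral>x\<in>{0<..<A}. (cmod (f x))\<^sup>2 \<partial>lborel) \<noteq> 0"
  shows "kappa1 A \<beta> \<le> (\<integral>x\<in>{0<..<A}. (4 * pi * x * (cmod (g x))\<^sup>2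
                         + \<beta>\<^sup>2 * x / (4 * pi) * (cmod (f x))\<^sup>2) \<partial>lborel)
                     / (\<integral>x\<in>{0<..<A}. (cmod (f x))\<^sup>2 \<partial>lborel)"
  unfolding kappa1_def
proof (rule cInf_lower)
  show "bdd_below {(\<integral>x\<in>{0<..<A}. (4 * pi * x * (cmod (g x))\<^sup>2
                         + \<beta>\<^sup>2 * x / (4 * pi) * (cmod (f x))\<^sup>2) \<partial>lborel)
                     / (\<integral>x\<in>{0<..<A}. (cmod (f x))\<^sup>2 \<partial>lborel)
                   | f g. in_F A f g \<and> (\<integral>x\<in>{0<..<A}. (cmod (f x))\<^sup>2 \<partial>lborel) \<noteq> 0}"
  proof (rule bdd_belowI[of _ 0], clarify)
    fix f g :: "real \<Rightarrow> complex"
    have "0 \<le> (\<integral>x\<in>{0<..<A}. (4 * pi * x * (cmod (g x))\<^sup>2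
                         + \<beta>\<^sup>2 * x / (4 * pi) * (cmod (f x))\<^sup>2) \<partial>lborel)"
      "0 \<le> (\<integral>x\<in>{0<..<A}. (cmod (f x))\<^sup>2 \<partial>lborel)"
      unfolding set_lebesgue_integral_def
      by (intro Bochner_Integration.integral_nonneg; simp add: indicator_def)+
    then show "0 \<le> (\<integral>x\<in>{0<..<A}. (4 * pi * x * (cmod (g x))\<^sup>2
                         + \<beta>\<^sup>2 * x / (4 * pi) * (cmod (f x))\<^sup>2) \<partial>lborel)
                     / (\<integral>x\<in>{0<..<A}. (cmod (f x))\<^sup>2 \<partial>lborel)"
      by simp
  qed
qed (use assms in blast)

lemma set_integral_Ioo_exp:
  fixes A k :: real
  assumes "0 \<le> A" "k \<noteq> 0"
  shows "(LINT x:{0<..<A}|lborel. exp (-(k*x))) = (1 - exp (-(k*A))) / k"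
  using assms
  by (subst set_integral_Ioo_FTC[where F="\<lambda>x. - exp (-(k*x)) / k"])
    (auto intro!: continuous_intros derivative_eq_intros simp: field_simps)

lemma set_integral_Ioo_mult_exp:
  fixes A k :: real
  assumes "0 \<le> A" "k \<noteq> 0"
  shows "(LINT x:{0<..<A}|lborel. x * exp (-(k*x)))
    = ((LINT x:{0<..<A}|lborel. exp (-(k*x))) - A * exp (-(k*A))) / k"
  using assms
  by (simp add: set_integral_Ioo_exp,
      subst set_integral_Ioo_FTC[where F="\<lambda>x. - (x/k + 1/k^2) * exp (-(k*x))"])
    (auto intro!: continuous_intros derivative_eq_intros simp: field_simps power2_eq_square)

theorem mainTheorem8:
  fixes astar \<beta> :: real
  assumes "astar > 0" and "\<beta> > 0"
  shows "kappa1 astar \<beta> < \<beta>"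
proof -
  define c where "c = \<beta> / (4*pi)"
  define f where "f x = complex_of_real (exp (-c*x))" for x
  define g where "g x = complex_of_real (-c * exp (-c*x))" for x
  have c: "c > 0" using assms(2) by (simp add: c_def)
  have nf: "(cmod (f x))\<^sup>2 = exp (-(2*c*x))" and ng: "(cmod (g x))\<^sup>2 = c\<^sup>2 * exp (-(2*c*x))" for x
    using c by (simp_all add: f_def g_def norm_mult power2_eq_square flip: exp_add)
  have "in_F astar f g"
    unfolding f_def[abs_def] g_def[abs_def] using assms(1) by (intro in_F_exp) simp
  moreover define D where "D = (LINT x:{0<..<astar}|lborel. exp (-(2*c*x)))"
  moreover have "D > 0"
    using assms(1) c by (simp add: D_def set_integral_Ioo_exp)
  moreover have "(\<integral>x\<in>{0<..<astar}. (4 * pi * x * (cmod (g x))\<^sup>2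
                     + \<beta>\<^sup>2 * x / (4 * pi) * (cmod (f x))\<^sup>2) \<partial>lborel)
      = 2*c*\<beta> * (LINT x:{0<..<astar}|lborel. x * exp (-(2*c*x)))"
  proof -
    have "(\<lambda>x. 4 * pi * x * (cmod (g x))\<^sup>2 + \<beta>\<^sup>2 * x / (4 * pi) * (cmod (f x))\<^sup>2)
        = (\<lambda>x. 2*c*\<beta> * (x * exp (-(2*c*x))))"
      unfolding nf ng c_def by (auto simp: fun_eq_iff field_simps power2_eq_square)
    then show ?thesis by (simp only: set_integral_mult_right)
  qed
  ultimately have "kappa1 astar \<beta> \<le> \<beta> * (D - astar * exp (-(2*c*astar))) / D"
    using kappa1_le_Rayleigh_quotient[of astar f g \<beta>] assms(1) c
    by (simp add: nf set_integral_Ioo_mult_exp flip: D_def)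
  also have "\<dots> < \<beta>"
    using \<open>D > 0\<close> assms by (simp add: divide_less_eq)
  finally show ?thesis .
qed

end
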